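(* Let $\kappa$ be a regular uncountable cardinal, let $J$ be a $\kappa$-complete ideal on $\kappa$ with $NS_\kappa \subseteq J$, and let $\eta$ be an infinite ordinal less than $Depth([\kappa]^\kappa, \searrow)$ (respectively, less than $Depth([\kappa]^\kappa, \nearrow)$). Suppose that $\clubsuit^{\rm ev}_\kappa[J]$ holds. Then there exists a descending (respectively, ascending) $(J, I_\kappa)$-tower of length $\eta$.
   Context: An ideal on $\kappa$ is a nonempty $J \subseteq P(\kappa)$ with $\kappa \notin J$, every bounded subset of $\kappa$ in $J$, $J$ closed under subsets and under unions of two members. $J^+ = P(\kappa)\setminus J$. $J$ is $\kappa$-complete if the union of fewer than $\kappa$ members of $J$ is in $J$. $I_\kappa$ is the ideal of bounded subsets of $\kappa$, $NS_\kappa$ the nonstationary ideal, $[\kappa]^\kappa$ the set of subsets of $\kappa$ of size $\kappa$, and $acc(\kappa)$ the set of nonzero limit ordinals below $\kappa$. $\clubsuit^{\rm ev}_\kappa[J]$ asserts the existence of $s_\alpha \subseteq \alpha$ with $\sup s_\alpha = \alpha$ for $\alpha \in acc(\kappa)$ such that $\{\alpha \in acc(\kappa) : \exists \beta < \alpha\, (s_\alpha \setminus \beta \subseteq A)\} \in J^+$ for all $A \in [\kappa]^\kappa$. For an ideal $J$ on $\kappa$, $Y \subseteq P(\kappa)$ and an ordinal $\delta$, a descending (respectively, ascending) $(J,Y)$-tower of length $\delta$ is a sequence $\langle A_\alpha : \alpha < \delta\rangle$ with each $A_\alpha \in J^+$ such that whenever $\alpha < \beta < \delta$: $A_\beta \setminus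 A_\alpha \in Y$ and $A_\alpha \setminus A_\beta \in J^+$ (respectively, $A_\alpha \setminus A_\beta \in Y$ and $A_\beta \setminus A_\alpha \in J^+$). $Depth([\kappa]^\kappa, \nearrow)$ (respectively, $Depth([\kappa]^\kappa, \searrow)$) is the least ordinal $\eta$ such that there is no ascending (respectively, descending) $(I_\kappa, I_\kappa)$-tower of length $\eta$. *)

theory Defs
  imports Main "HOL-Library.Countable_Set"
begin

unbundle cardinal_syntax

text \<open>A cardinal kappa is represented by a cardinal order k on the type 'a
  (card_order k, so Field k = UNIV); the ordinals below kappa are the elements
  of 'a, ordered by k.\<close>

definition olt :: "'a rel \<Rightarrow> 'a \<Rightarrow> 'a \<Rightarrow> bool" where
  "olt k x y \<longleftrightarrow> (x, y) \<in> k \<and> x \<noteq> y"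

definition below :: "'a rel \<Rightarrow> 'a \<Rightarrow> 'a set" where
  "below k \<alpha> = {\<beta>. olt k \<beta> \<alpha>}"

definition bounded_in :: "'a rel \<Rightarrow> 'a set \<Rightarrow> bool" where
  "bounded_in k A \<longleftrightarrow> (\<exists>\<beta>. A \<subseteq> below k \<beta>)"

definition I_bd :: "'a rel \<Rightarrow> 'a set set" where
  "I_bd k = {A. bounded_in k A}"

text \<open>acc(kappa): nonzero limit ordinals below kappa.\<close>
definition acc :: "'a rel \<Rightarrow> 'a set" where
  "acc k = {\<alpha>. (\<exists>\<beta>. olt k \<beta> \<alpha>) \<and>
                (\<forall>\<beta>. olt k \<beta> \<alpha> \<longrightarrow> (\<exists>\<gamma>. olt k \<beta> \<gamma> \<and> olt k \<gamma> \<alpha>))}"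

definition is_ideal :: "'a rel \<Rightarrow> 'a set set \<Rightarrow> bool" where
  "is_ideal k J \<longleftrightarrow> J \<noteq> {} \<and> UNIV \<notin> J \<and>
     (\<forall>A. bounded_in k A \<longrightarrow> A \<in> J) \<and>
     (\<forall>A B. A \<in> J \<longrightarrow> B \<subseteq> A \<longrightarrow> B \<in> J) \<and>
     (\<forall>A B. A \<in> J \<longrightarrow> B \<in> J \<longrightarrow> A \<union> B \<in> J)"

definition kappa_complete :: "'a rel \<Rightarrow> 'a set set \<Rightarrow> bool" where
  "kappa_complete k J \<longleftrightarrow> (\<forall>F. F \<subseteq> J \<longrightarrow> |F| <o k \<longrightarrow> \<Union>F \<in> J)"

definition club :: "'a rel \<Rightarrow> 'a set \<Rightarrow> bool" where
  "club k C \<longleftrightarrow> (\<forall>\<alpha>. \<exists>\<beta>\<in>C. olt k \<alpha> \<beta>) \<and>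
     (\<forall>\<alpha>\<in>acc k. (\<forall>\<beta>. olt k \<beta> \<alpha> \<longrightarrow> (\<exists>\<gamma>\<in>C. olt k \<beta> \<gamma> \<and> olt k \<gamma> \<alpha>)) \<longrightarrow> \<alpha> \<in> C)"

definition stationary :: "'a rel \<Rightarrow> 'a set \<Rightarrow> bool" where
  "stationary k A \<longleftrightarrow> (\<forall>C. club k C \<longrightarrow> A \<inter> C \<noteq> {})"

definition NS :: "'a rel \<Rightarrow> 'a set set" where
  "NS k = {A. \<not> stationary k A}"

definition clubsuit_ev :: "'a rel \<Rightarrow> 'a set set \<Rightarrow> bool" where
  "clubsuit_ev k J \<longleftrightarrow> (\<exists>s :: 'a \<Rightarrow> 'a set.
     (\<forall>\<alpha>\<in>acc k. s \<alpha> \<subseteq> below k \<alpha> \<and>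
        (\<forall>\<beta>. olt k \<beta> \<alpha> \<longrightarrow> (\<exists>\<gamma>\<in>s \<alpha>. (\<beta>, \<gamma>) \<in> k))) \<and>
     (\<forall>A. |A| =o k \<longrightarrow>
        {\<alpha>\<in>acc k. \<exists>\<beta>. olt k \<beta> \<alpha> \<and> s \<alpha> - below k \<beta> \<subseteq> A} \<notin> J))"

text \<open>Towers of length eta, eta a well-order on 'b; the sequence is indexed by Field eta.
  Membership in J^+ is expressed as non-membership in J.\<close>
definition desc_tower :: "'a set set \<Rightarrow> 'a set set \<Rightarrow> 'b rel \<Rightarrow> ('b \<Rightarrow> 'a set) \<Rightarrow> bool" where
  "desc_tower J Y \<eta> A \<longleftrightarrow> (\<forall>x\<in>Field \<eta>. A x \<notin> J) \<and>
     (\<forall>x\<in>Field \<eta>. \<forall>y\<in>Field \<eta>. (x, y) \<in> \<eta> \<and> x \<noteq> y \<longrightarrow>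
        A y - A x \<in> Y \<and> A x - A y \<notin> J)"

definition asc_tower :: "'a set set \<Rightarrow> 'a set set \<Rightarrow> 'b rel \<Rightarrow> ('b \<Rightarrow> 'a set) \<Rightarrow> bool" where
  "asc_tower J Y \<eta> A \<longleftrightarrow> (\<forall>x\<in>Field \<eta>. A x \<notin> J) \<and>
     (\<forall>x\<in>Field \<eta>. \<forall>y\<in>Field \<eta>. (x, y) \<in> \<eta> \<and> x \<noteq> y \<longrightarrow>
        A x - A y \<in> Y \<and> A y - A x \<notin> J)"

text \<open>eta < Depth([kappa]^kappa, descending): since Depth is the least ordinal with no
  descending (I_kappa, I_kappa)-tower of that length, eta is below it iff every ordinal
  xi \<le> eta admits such a tower.  Every ordinal \<le> eta is represented (up to isomorphism)
  by a well-order on the same type as eta.\<close>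
definition below_depth_desc :: "'a rel \<Rightarrow> 'b rel \<Rightarrow> bool" where
  "below_depth_desc k \<eta> \<longleftrightarrow> (\<forall>\<xi> :: 'b rel. Well_order \<xi> \<longrightarrow> \<xi> \<le>o \<eta> \<longrightarrow>
      (\<exists>A :: 'b \<Rightarrow> 'a set. desc_tower (I_bd k) (I_bd k) \<xi> A))"

definition below_depth_asc :: "'a rel \<Rightarrow> 'b rel \<Rightarrow> bool" where
  "below_depth_asc k \<eta> \<longleftrightarrow> (\<forall>\<xi> :: 'b rel. Well_order \<xi> \<longrightarrow> \<xi> \<le>o \<eta> \<longrightarrow>
      (\<exists>A :: 'b \<Rightarrow> 'a set. asc_tower (I_bd k) (I_bd k) \<xi> A))"

end

theory Submission
  imports Defs
begin

text \<open>Fix a \<open>\<clubsuit>\<^sup>e\<^sup>v\<close>-sequence \<open>s\<close> and send \<open>B \<subseteq> \<kappa>\<close> to \<open>G B\<close>, the set of limits \<open>\<alpha>\<close> whose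
  ladder \<open>s \<alpha>\<close> eventually lies inside \<open>B\<close>.  If \<open>B - B'\<close> is bounded by \<open>\<gamma>\<close>, every \<open>\<alpha> > \<gamma>\<close> in
  \<open>G B\<close> is also in \<open>G B'\<close>, so \<open>G B - G B'\<close> is bounded.  Since ladders are cofinal, \<open>G\<close> maps
  disjoint sets to disjoint sets, hence \<open>G (B - B') \<subseteq> G B - G B'\<close>; if \<open>B - B'\<close> is unbounded,
  it has size \<open>\<kappa>\<close> by regularity and \<open>G (B - B')\<close> is \<open>J\<close>-positive by \<open>\<clubsuit>\<^sup>e\<^sup>v\<close>.  So \<open>G\<close> maps an
  \<open>(I\<^sub>\<kappa>, I\<^sub>\<kappa>)\<close>-tower of length \<open>\<eta>\<close> pointwise to a \<open>(J, I\<^sub>\<kappa>)\<close>-tower.\<close>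

definition guessing_set :: "'a rel \<Rightarrow> ('a \<Rightarrow> 'a set) \<Rightarrow> 'a set \<Rightarrow> 'a set" where
  "guessing_set k s B = {\<alpha>\<in>acc k. \<exists>\<beta>. olt k \<beta> \<alpha> \<and> s \<alpha> - below k \<beta> \<subseteq> B}"

lemma clubsuit_ev_guessing_set:
  "clubsuit_ev k J \<longleftrightarrow> (\<exists>s.
     (\<forall>\<alpha>\<in>acc k. s \<alpha> \<subseteq> below k \<alpha> \<and> (\<forall>\<beta>. olt k \<beta> \<alpha> \<longrightarrow> (\<exists>\<gamma>\<in>s \<alpha>. (\<beta>, \<gamma>) \<in> k))) \<and>
     (\<forall>A. |A| =o k \<longrightarrow> guessing_set k s A \<notin> J))"
  unfolding clubsuit_ev_def guessing_set_def ..

lemma guessing_set_mono: "B \<subseteq> B' \<Longrightarrow> guessing_set k s B \<subseteq> guessing_set k s B'"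
  unfolding guessing_set_def by blast

lemma desc_tower_image:
  assumes "desc_tower Y Y \<eta> B"
    and "\<And>X. X \<notin> Y \<Longrightarrow> F X \<notin> J"
    and "\<And>X X'. X - X' \<in> Y \<Longrightarrow> F X - F X' \<in> Y'"
    and "\<And>X X'. X - X' \<notin> Y \<Longrightarrow> F X - F X' \<notin> J"
  shows "desc_tower J Y' \<eta> (\<lambda>x. F (B x))"
  using assms(1) unfolding desc_tower_def by (simp add: assms(2-4))

lemma asc_tower_image:
  assumes "asc_tower Y Y \<eta> B"
    and "\<And>X. X \<notin> Y \<Longrightarrow> F X \<notin> J"
    and "\<And>X X'. X - X' \<in> Y \<Longrightarrow> F X - F X' \<in> Y'"
    and "\<And>X X'. X - X' \<notin> Y \<Longrightarrow> F X - F X' \<notin> J"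
  shows "asc_tower J Y' \<eta> (\<lambda>x. F (B x))"
  using assms(1) unfolding asc_tower_def by (simp add: assms(2-4))

locale unbounded_linear_order =
  fixes k :: "'a rel"
  assumes linear_order: "linear_order k"
    and no_greatest: "\<And>x. \<exists>y. olt k x y"
begin

lemma le_refl: "(x, x) \<in> k"
  using linear_order unfolding linear_order_on_def partial_order_on_def preorder_on_def refl_on_def
  by blast

lemma le_total: "(x, y) \<in> k \<or> (y, x) \<in> k"
  using linear_order le_refl[of x] unfolding linear_order_on_def total_on_def
  by (cases "x = y") auto

lemma le_trans: "(x, y) \<in> k \<Longrightarrow> (y, z) \<in> k \<Longrightarrow> (x, z) \<in> k"
  using linear_order unfolding linear_order_on_def partial_order_on_def preorder_on_def
  by (meson transD)

lemma le_antisym: "(x, y) \<in> k \<Longrightarrow> (y, x) \<in> k \<Longrightarrow> x = y"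
  using linear_order unfolding linear_order_on_def partial_order_on_def by (meson antisymD)

lemma olt_le_trans: "olt k x y \<Longrightarrow> (y, z) \<in> k \<Longrightarrow> olt k x z"
  unfolding olt_def using le_trans le_antisym by blast

lemma notin_below_iff: "x \<notin> below k y \<longleftrightarrow> (y, x) \<in> k"
  unfolding below_def olt_def using le_total le_refl le_antisym by blast

lemma max_below:
  assumes "olt k b1 \<alpha>" and "olt k b2 \<alpha>"
  obtains m where "(b1, m) \<in> k" and "(b2, m) \<in> k" and "olt k m \<alpha>"
  using assms le_total le_refl by blast

lemma unbounded_ordIso:
  assumes "regularCard k" and "\<not> bounded_in k A"
  shows "|A| =o k"
proof -
  have "cofinal A k"
    unfolding cofinal_def
  proof
    fix a
    obtain c where "olt k a c" using no_greatest by blast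
    moreover obtain b where "b \<in> A" and "(c, b) \<in> k"
      using assms(2) notin_below_iff unfolding bounded_in_def by blast
    ultimately show "\<exists>b\<in>A. a \<noteq> b \<and> (a, b) \<in> k"
      using olt_le_trans unfolding olt_def by blast
  qed
  moreover have "Field k = UNIV"
    using linear_order unfolding linear_order_on_def partial_order_on_def preorder_on_def
    by (simp add: refl_on_def Field_def) blast
  ultimately show ?thesis using assms(1) unfolding regularCard_def by blast
qed

lemma guessing_set_disjoint:
  assumes cofinal: "\<forall>\<alpha>\<in>acc k. \<forall>\<beta>. olt k \<beta> \<alpha> \<longrightarrow> (\<exists>\<gamma>\<in>s \<alpha>. (\<beta>, \<gamma>) \<in> k)"
    and "C \<inter> D = {}"
  shows "guessing_set k s C \<inter> guessing_set k s D = {}"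
proof (rule ccontr)
  assume "guessing_set k s C \<inter> guessing_set k s D \<noteq> {}"
  then obtain \<alpha> b1 b2 where \<alpha>: "\<alpha> \<in> acc k"
    and b1: "olt k b1 \<alpha>" "s \<alpha> - below k b1 \<subseteq> C"
    and b2: "olt k b2 \<alpha>" "s \<alpha> - below k b2 \<subseteq> D"
    unfolding guessing_set_def by blast
  obtain m where m: "(b1, m) \<in> k" "(b2, m) \<in> k" "olt k m \<alpha>"
    using max_below[OF b1(1) b2(1)] .
  then obtain \<gamma> where "\<gamma> \<in> s \<alpha>" and "(m, \<gamma>) \<in> k" using cofinal \<alpha> by blast
  then have "\<gamma> \<in> C \<inter> D"
    using b1(2) b2(2) m le_trans notin_below_iff by blast
  then show False using assms(2) by blast
qed

lemma guessing_set_diff_bounded: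
  assumes "bounded_in k (B - B')"
  shows "bounded_in k (guessing_set k s B - guessing_set k s B')"
proof -
  obtain g where g: "B - B' \<subseteq> below k g" using assms unfolding bounded_in_def by blast
  obtain g' where g': "olt k g g'" using no_greatest by blast
  have "\<alpha> \<in> below k g'" if \<alpha>: "\<alpha> \<in> guessing_set k s B - guessing_set k s B'" for \<alpha>
  proof (rule ccontr)
    assume "\<alpha> \<notin> below k g'"
    then have "olt k g \<alpha>" using g' olt_le_trans notin_below_iff by blast
    obtain b where acc: "\<alpha> \<in> acc k" and b: "olt k b \<alpha>" "s \<alpha> - below k b \<subseteq> B"
      using \<alpha> unfolding guessing_set_def by blast
    obtain m where m: "(b, m) \<in> k" "(g, m) \<in> k" "olt k m \<alpha>"
      using max_below[OF b(1) \<open>olt k g \<alpha>\<close>] .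
    \<comment> \<open>beyond \<open>m\<close> the ladder lies in \<open>B\<close> and above the bound of \<open>B - B'\<close>\<close>
    have "s \<alpha> - below k m \<subseteq> B'"
      using b(2) g m le_trans notin_below_iff by blast
    then show False using \<alpha> acc m(3) unfolding guessing_set_def by blast
  qed
  then show ?thesis unfolding bounded_in_def by blast
qed

lemma guessing_set_diff_positive:
  assumes "is_ideal k J"
    and cofinal: "\<forall>\<alpha>\<in>acc k. \<forall>\<beta>. olt k \<beta> \<alpha> \<longrightarrow> (\<exists>\<gamma>\<in>s \<alpha>. (\<beta>, \<gamma>) \<in> k)"
    and guess: "\<And>A. \<not> bounded_in k A \<Longrightarrow> guessing_set k s A \<notin> J"
    and "\<not> bounded_in k (B - B')"
  shows "guessing_set k s B - guessing_set k s B' \<notin> J"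
proof
  assume diff: "guessing_set k s B - guessing_set k s B' \<in> J"
  have "guessing_set k s (B - B') \<inter> guessing_set k s B' = {}"
    using guessing_set_disjoint[OF cofinal] by blast
  moreover have "guessing_set k s (B - B') \<subseteq> guessing_set k s B"
    by (rule guessing_set_mono) blast
  ultimately have "guessing_set k s (B - B') \<subseteq> guessing_set k s B - guessing_set k s B'"
    by blast
  then have "guessing_set k s (B - B') \<in> J"
    using diff assms(1) unfolding is_ideal_def by blast
  then show False using guess assms(4) by blast
qed

end

lemma card_order_unbounded_linear_order:
  assumes "card_order k" and "infinite (Field k)"
  shows "unbounded_linear_order k"
proof
  show "linear_order k"
    using assms(1) card_order_on_well_order_on unfolding well_order_on_def by blast
  have "Field k = UNIV" and "Card_order k"
    using assms(1) card_order_on_Card_order by blast+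
  then show "\<exists>y. olt k x y" for x
    using infinite_Card_order_limit[OF _ assms(2)] unfolding olt_def by blast
qed

theorem theorem2p31:
  fixes k :: "'a rel" and J :: "'a set set" and \<eta> :: "'b rel"
  assumes "card_order k" and "regularCard k" and "\<not> countable (Field k)"
    and "is_ideal k J" and "kappa_complete k J" and "NS k \<subseteq> J"
    and "Well_order \<eta>" and "infinite (Field \<eta>)"
    and "clubsuit_ev k J"
  shows "(below_depth_desc k \<eta> \<longrightarrow> (\<exists>A :: 'b \<Rightarrow> 'a set. desc_tower J (I_bd k) \<eta> A)) \<and>
         (below_depth_asc k \<eta> \<longrightarrow> (\<exists>A :: 'b \<Rightarrow> 'a set. asc_tower J (I_bd k) \<eta> A))"
proof -
  interpret unbounded_linear_order k
    using card_order_unbounded_linear_order assms(1,3) countable_finite by blast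
  obtain s where cofinal: "\<forall>\<alpha>\<in>acc k. \<forall>\<beta>. olt k \<beta> \<alpha> \<longrightarrow> (\<exists>\<gamma>\<in>s \<alpha>. (\<beta>, \<gamma>) \<in> k)"
    and guess: "\<And>A. \<not> bounded_in k A \<Longrightarrow> guessing_set k s A \<notin> J"
    using assms(9) unbounded_ordIso[OF assms(2)] unfolding clubsuit_ev_guessing_set by blast
  let ?G = "guessing_set k s"
  have positive: "X \<notin> I_bd k \<Longrightarrow> ?G X \<notin> J" for X
    using guess unfolding I_bd_def by blast
  have diff_bounded: "X - X' \<in> I_bd k \<Longrightarrow> ?G X - ?G X' \<in> I_bd k" for X X'
    using guessing_set_diff_bounded unfolding I_bd_def by blast
  have diff_positive: "X - X' \<notin> I_bd k \<Longrightarrow> ?G X - ?G X' \<notin> J" for X X'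
    using guessing_set_diff_positive[OF assms(4) cofinal guess] unfolding I_bd_def by blast
  have "\<eta> \<le>o \<eta>" using assms(7) ordLeq_reflexive by blast
  show ?thesis
  proof (intro conjI impI)
    assume "below_depth_desc k \<eta>"
    then obtain B where "desc_tower (I_bd k) (I_bd k) \<eta> B"
      using \<open>\<eta> \<le>o \<eta>\<close> assms(7) unfolding below_depth_desc_def by blast
    then show "\<exists>A. desc_tower J (I_bd k) \<eta> A"
      using desc_tower_image[where F = ?G, OF _ positive diff_bounded diff_positive] by blast
  next
    assume "below_depth_asc k \<eta>"
    then obtain B where "asc_tower (I_bd k) (I_bd k) \<eta> B"
      using \<open>\<eta> \<le>o \<eta>\<close> assms(7) unfolding below_depth_asc_def by blast
    then show "\<exists>A. asc_tower J (I_bd k) \<eta> A"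
      using asc_tower_image[where F = ?G, OF _ positive diff_bounded diff_positive] by blast
  qed
qed

end
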